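(* Let $M=\frac32-\sqrt2$. For real $f_2,f_3,y_2,y_3$ put $\hat A=1+(1-f_2)(1-y_2)+2(1-f_3)(1-y_3)$ and $\hat F_1=1/\hat A$, and define $$\hat\alpha(f_2,f_3,y_2,y_3)=\frac{1}{(\frac12-\hat F_1)\hat A}\Bigl((1-f_2)\,y_2(\tfrac12-y_2)+2Mf_2(1-\hat A)+2(1-f_3)\,y_3(\tfrac12-y_3)+4Mf_2(1-y_3)\Bigr).$$ Then for all $f_2,f_3,y_2,y_3\in[0,\frac12]$ satisfying $f_2+2f_3=1$, $\frac1{13}\le f_2\le\frac12$ and $0\le y_2,y_3\le\frac{6}{13}$, we have $\hat\alpha(f_2,f_3,y_2,y_3)\le\frac{9231}{10000}$.
   Context: In the paper's notation, with $\Phi(x)=\frac{1}{x(\frac12-x)}$, one has $y(\frac12-y)=1/\Phi(y)$ and $\frac{1}{(\frac12-\hat F_1)\hat A}=\frac{\Phi(\hat F_1)\hat F_1}{\hat A}$. Under the hypotheses $\hat A>2$, so $\hat\alpha$ is well defined. *)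

theory Defs
  imports Complex_Main
begin

definition M_const :: real where
  "M_const = 3/2 - sqrt 2"

definition A_hat :: "real \<Rightarrow> real \<Rightarrow> real \<Rightarrow> real \<Rightarrow> real" where
  "A_hat f2 f3 y2 y3 = 1 + (1 - f2) * (1 - y2) + 2 * (1 - f3) * (1 - y3)"

definition F1_hat :: "real \<Rightarrow> real \<Rightarrow> real \<Rightarrow> real \<Rightarrow> real" where
  "F1_hat f2 f3 y2 y3 = 1 / A_hat f2 f3 y2 y3"

definition alpha_hat :: "real \<Rightarrow> real \<Rightarrow> real \<Rightarrow> real \<Rightarrow> real" where
  "alpha_hat f2 f3 y2 y3 =
     (1 / ((1/2 - F1_hat f2 f3 y2 y3) * A_hat f2 f3 y2 y3)) *
     ((1 - f2) * y2 * (1/2 - y2) + 2 * M_const * f2 * (1 - A_hat f2 f3 y2 y3)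
      + 2 * (1 - f3) * y3 * (1/2 - y3) + 4 * M_const * f2 * (1 - y3))"

end

theory Submission
  imports Defs
begin

text \<open>Eliminating \<open>f3 = (1 - f2)/2\<close> gives \<open>A_hat = 2 + D\<close> with
  \<open>D = 1 - (1 - f2) y2 - (1 + f2) y3\<close>, so that \<open>alpha_hat = 2N/D\<close> for a numerator \<open>N\<close>
  quadratic in \<open>y2, y3\<close>. On the box \<open>y2, y3 \<le> 6/13\<close> we have \<open>D \<ge> 1/13 > 0\<close>, and
  \<open>c D/2 - N\<close> (with \<open>c = 0.9231\<close>) is written, in the variables \<open>6/13 - y2\<close> and
  \<open>6/13 - y3\<close>, as a sum of terms that are visibly nonnegative once \<open>M < 0.0858\<close>.
  The bound holds for all \<open>0 \<le> f2 \<le> 1\<close>.\<close>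

lemma M_const_bounds: "0 \<le> M_const" "M_const \<le> 858/10000"
proof -
  have "sqrt 2 \<le> sqrt (9/4)" by simp
  also have "sqrt (9/4) = 3/(2::real)"
    by (simp add: real_sqrt_divide)
  finally show "0 \<le> M_const" unfolding M_const_def by simp
  have "sqrt ((14142/10000)^2) \<le> sqrt 2"
    by (subst real_sqrt_le_iff) (simp add: power2_eq_square)
  hence "14142/10000 \<le> sqrt 2" by simp
  thus "M_const \<le> 858/10000" unfolding M_const_def by simp
qed

lemma alpha_hat_eq_quotient:
  assumes "f2 + 2 * f3 = 1" and "A_hat f2 f3 y2 y3 \<noteq> 0"
  shows "alpha_hat f2 f3 y2 y3 =
    2 * ((1 - f2) * y2 * (1/2 - y2) + (1 + f2) * y3 * (1/2 - y3)
         + 2 * M_const * f2 * (1 - f2) * (y2 - y3))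
    / (1 - (1 - f2) * y2 - (1 + f2) * y3)"
proof -
  have f3: "f3 = (1 - f2) / 2" using assms(1) by simp
  have "(1/2 - 1 / A_hat f2 f3 y2 y3) * A_hat f2 f3 y2 y3 = A_hat f2 f3 y2 y3 / 2 - 1"
    using assms(2) by (simp add: field_simps)
  also have "\<dots> = (1 - (1 - f2) * y2 - (1 + f2) * y3) / 2"
    unfolding A_hat_def f3 by (simp add: field_simps)
  finally have denominator: "(1/2 - F1_hat f2 f3 y2 y3) * A_hat f2 f3 y2 y3
      = (1 - (1 - f2) * y2 - (1 + f2) * y3) / 2"
    unfolding F1_hat_def .
  have numerator: "(1 - f2) * y2 * (1/2 - y2) + 2 * M_const * f2 * (1 - A_hat f2 f3 y2 y3)
      + 2 * (1 - f3) * y3 * (1/2 - y3) + 4 * M_const * f2 * (1 - y3)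
    = (1 - f2) * y2 * (1/2 - y2) + (1 + f2) * y3 * (1/2 - y3)
      + 2 * M_const * f2 * (1 - f2) * (y2 - y3)"
    unfolding A_hat_def f3 by (simp add: field_simps)
  show ?thesis
    unfolding alpha_hat_def denominator numerator by simp
qed

lemma quotient_numerator_le:
  fixes m f y2 y3 :: real
  assumes m: "0 \<le> m" "m \<le> 858/10000" and f: "0 \<le> f" "f \<le> 1"
    and y2: "y2 \<le> 6/13" and y3: "y3 \<le> 6/13"
  shows "(1 - f) * y2 * (1/2 - y2) + (1 + f) * y3 * (1/2 - y3) + 2 * m * f * (1 - f) * (y2 - y3)
         \<le> 9231/10000 * (1 - (1 - f) * y2 - (1 + f) * y3) / 2"
proof -
  define c :: real where "c = 9231/10000"
  define \<delta> :: real where "\<delta> = 1/2 + c/2 - 12/13"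
  define u where "u = 6/13 - y2"
  define v where "v = 6/13 - y3"
  have u: "0 \<le> u" and v: "0 \<le> v" using y2 y3 by (auto simp: u_def v_def)
  have \<delta>: "0 \<le> \<delta>" by (simp add: \<delta>_def c_def)
  have certificate:
    "c * (1 - (1 - f) * y2 - (1 + f) * y3) / 2
       - ((1 - f) * y2 * (1/2 - y2) + (1 + f) * y3 * (1/2 - y3) + 2 * m * f * (1 - f) * (y2 - y3))
     = (c/2 - 12/13 * (\<delta> + 6/13)) + (1 - f) * u * (\<delta> + u) + 2 * m * f * (1 - f) * u
       + v * ((1 + f) * (\<delta> + v) - 2 * m * f * (1 - f))"
    unfolding u_def v_def \<delta>_def by (simp add: field_simps)
  have "2 * m * (f * (1 - f)) \<le> 2 * (858/10000) * (f * (1 - f))"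
    using m f by (intro mult_right_mono) auto
  also have "\<dots> \<le> (1 + f) * \<delta>"
  proof -
    \<comment> \<open>the quadratic \<open>(1 + f) \<delta> - 0.1716 f (1 - f)\<close> has negative discriminant\<close>
    have "0 \<le> (f - 86532500/223080000) * (f - 86532500/223080000)" by simp
    thus ?thesis unfolding \<delta>_def c_def by (simp add: algebra_simps)
  qed
  finally have "2 * m * f * (1 - f) \<le> (1 + f) * \<delta>" by (simp add: mult.assoc)
  moreover have "0 \<le> (1 + f) * v" using f v by simp
  ultimately have "0 \<le> (1 + f) * (\<delta> + v) - 2 * m * f * (1 - f)"
    by (simp add: algebra_simps)
  with v have "0 \<le> v * ((1 + f) * (\<delta> + v) - 2 * m * f * (1 - f))" by simp
  moreover have "0 \<le> c/2 - 12/13 * (\<delta> + 6/13)" by (simp add: \<delta>_def c_def)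
  moreover have "0 \<le> (1 - f) * u * (\<delta> + u)" using f u \<delta> by simp
  moreover have "0 \<le> 2 * m * f * (1 - f) * u" using m f u by simp
  ultimately show ?thesis
    using certificate unfolding c_def by linarith
qed

theorem lemma24:
  fixes f2 f3 y2 y3 :: real
  assumes "f2 \<in> {0..1/2}" and "f3 \<in> {0..1/2}" and "y2 \<in> {0..1/2}" and "y3 \<in> {0..1/2}"
    and "f2 + 2 * f3 = 1"
    and "1/13 \<le> f2" and "f2 \<le> 1/2"
    and "0 \<le> y2" and "y2 \<le> 6/13" and "0 \<le> y3" and "y3 \<le> 6/13"
  shows "alpha_hat f2 f3 y2 y3 \<le> 9231/10000"
proof -
  define D where "D = 1 - (1 - f2) * y2 - (1 + f2) * y3"
  have "(1 - f2) * y2 + (1 + f2) * y3 \<le> (1 - f2) * (6/13) + (1 + f2) * (6/13)"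
    using assms by (intro add_mono mult_left_mono) auto
  also have "\<dots> = 12/13" by (simp add: field_simps)
  finally have D: "0 < D" unfolding D_def by simp
  have f3: "f3 = (1 - f2) / 2" using assms(5) by simp
  have "A_hat f2 f3 y2 y3 = 2 + D" unfolding A_hat_def D_def f3 by (simp add: field_simps)
  hence "alpha_hat f2 f3 y2 y3 =
    2 * ((1 - f2) * y2 * (1/2 - y2) + (1 + f2) * y3 * (1/2 - y3)
         + 2 * M_const * f2 * (1 - f2) * (y2 - y3)) / D"
    using alpha_hat_eq_quotient[OF assms(5)] D unfolding D_def by simp
  also have "\<dots> \<le> 9231/10000"
    using quotient_numerator_le[OF M_const_bounds, of f2 y2 y3] assms D
    unfolding D_def by (simp add: divide_le_eq)
  finally show ?thesis .
qed

end
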